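(* The exact sequence \[0\to\mathbb Z\to\mathbb Z[\tfrac12]\to\mathbb Z(2^\infty)\to0\] (inclusion followed by the quotient map $\mathbb Z[\tfrac12]\to\mathbb Z[\tfrac12]/\mathbb Z=\mathbb Z(2^\infty)$) is coarsely split. Moreover, the metric $d_{\mathbb Z}$ in the definition of coarse splitting can be chosen to be the standard word metric $d_{\mathbb Z}(a,b)=|a-b|$.
   Context: $\mathbb Z[\tfrac12]=\{m/2^k:m\in\mathbb Z,k\ge0\}$; $\mathbb Z(2^\infty)=\varinjlim(\mathbb Z_2\to\mathbb Z_4\to\cdots)\cong\mathbb Z[\tfrac12]/\mathbb Z$. A proper left invariant metric is $d(g,h)=\|g^{-1}h\|$ for a proper norm ($\|g\|=0$ iff $g$ trivial, symmetric, subadditive, finite balls). An exact sequence $0\to K\overset{i}{\to}G\overset{\pi}{\to}Q\to0$ is coarsely split if there are proper left invariant metrics $d_K,d_G,d_Q$ and a coarse equivalence $f:(G,d_G)\to(K\oplus Q,d_K\oplus d_Q)$ ($\ell_1$ sum metric) with $f\circ i$ at bounded distance from $k\mapsto(k,0)$ and $\pi'\circ f$ at bounded distance from $\pi$, $\pi'$ the projection onto $Q$. Coarse maps: for each $\delta$ there is $\epsilon$ with $d(x,y)\le\delta\Rightarrow d(f x,f y)\le\epsilon$; coarse equivalences are coarse maps with coarse inverses up to bounded distance. *)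

theory Defs
  imports Main "HOL.Real"
begin

definition dyadic :: "rat set" where
  "dyadic = {of_int m / 2 ^ k | m k. True}"

text \<open>Z(2^infinity) = Z[1/2]/Z, represented by the coset representatives in [0,1),
  with addition modulo 1; the quotient map Z[1/2] -> Z[1/2]/Z is frac.\<close>
definition pruefer2 :: "rat set" where
  "pruefer2 = frac ` dyadic"

definition padd :: "rat \<Rightarrow> rat \<Rightarrow> rat" where
  "padd x y = frac (x + y)"

definition pneg :: "rat \<Rightarrow> rat" where
  "pneg x = frac (- x)"

definition proper_norm ::
  "'a set \<Rightarrow> ('a \<Rightarrow> 'a \<Rightarrow> 'a) \<Rightarrow> ('a \<Rightarrow> 'a) \<Rightarrow> 'a \<Rightarrow> ('a \<Rightarrow> real) \<Rightarrow> bool" where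
  "proper_norm S pl ng z n \<longleftrightarrow>
     (\<forall>g\<in>S. n g = 0 \<longleftrightarrow> g = z) \<and>
     (\<forall>g\<in>S. n (ng g) = n g) \<and>
     (\<forall>g\<in>S. \<forall>h\<in>S. n (pl g h) \<le> n g + n h) \<and>
     (\<forall>r::real. finite {g\<in>S. n g \<le> r})"

definition norm_metric ::
  "('a \<Rightarrow> 'a \<Rightarrow> 'a) \<Rightarrow> ('a \<Rightarrow> 'a) \<Rightarrow> ('a \<Rightarrow> real) \<Rightarrow> 'a \<Rightarrow> 'a \<Rightarrow> real" where
  "norm_metric pl ng n g h = n (pl (ng g) h)"

definition coarse_map ::
  "'a set \<Rightarrow> ('a \<Rightarrow> 'a \<Rightarrow> real) \<Rightarrow> 'b set \<Rightarrow> ('b \<Rightarrow> 'b \<Rightarrow> real) \<Rightarrow> ('a \<Rightarrow> 'b) \<Rightarrow> bool" where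
  "coarse_map X dX Y dY f \<longleftrightarrow>
     (\<forall>x\<in>X. f x \<in> Y) \<and>
     (\<forall>\<delta>. \<exists>\<epsilon>. \<forall>x\<in>X. \<forall>y\<in>X. dX x y \<le> \<delta> \<longrightarrow> dY (f x) (f y) \<le> \<epsilon>)"

definition bounded_distance ::
  "'a set \<Rightarrow> ('b \<Rightarrow> 'b \<Rightarrow> real) \<Rightarrow> ('a \<Rightarrow> 'b) \<Rightarrow> ('a \<Rightarrow> 'b) \<Rightarrow> bool" where
  "bounded_distance X dY f g \<longleftrightarrow> (\<exists>C. \<forall>x\<in>X. dY (f x) (g x) \<le> C)"

definition coarse_equivalence ::
  "'a set \<Rightarrow> ('a \<Rightarrow> 'a \<Rightarrow> real) \<Rightarrow> 'b set \<Rightarrow> ('b \<Rightarrow> 'b \<Rightarrow> real) \<Rightarrow> ('a \<Rightarrow> 'b) \<Rightarrow> bool" where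
  "coarse_equivalence X dX Y dY f \<longleftrightarrow>
     coarse_map X dX Y dY f \<and>
     (\<exists>g. coarse_map Y dY X dX g \<and>
          bounded_distance X dX (g \<circ> f) id \<and>
          bounded_distance Y dY (f \<circ> g) id)"

text \<open>K = int (all of it), G = dyadic with +, Q = pruefer2 with padd;
  i = of_int, pi = frac.  The l1 sum metric on K x Q.\<close>
definition coarsely_split_with :: "(int \<Rightarrow> real) \<Rightarrow> bool" where
  "coarsely_split_with nK \<longleftrightarrow>
     proper_norm UNIV (+) uminus 0 nK \<and>
     (\<exists>nG nQ (f :: rat \<Rightarrow> int \<times> rat).
        proper_norm dyadic (+) uminus 0 nG \<and>
        proper_norm pruefer2 padd pneg 0 nQ \<and>
        (let dK = norm_metric (+) uminus nK;
             dG = norm_metric (+) uminus nG;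
             dQ = norm_metric padd pneg nQ;
             dKQ = (\<lambda>(a, p) (b, q). dK a b + dQ p q)
         in coarse_equivalence dyadic dG (UNIV \<times> pruefer2) dKQ f \<and>
            bounded_distance UNIV dKQ (\<lambda>k. f (of_int k)) (\<lambda>k. (k, 0)) \<and>
            bounded_distance dyadic dQ (\<lambda>x. snd (f x)) frac))"

definition coarsely_split :: bool where
  "coarsely_split \<longleftrightarrow> (\<exists>nK. coarsely_split_with nK)"

end

theory Submission
  imports Defs
begin

text \<open>Every dyadic x splits as \<open>\<lfloor>x\<rfloor> + frac x\<close>, and \<open>x \<mapsto> (\<lfloor>x\<rfloor>, frac x)\<close> is a bijection
  \<open>\<int>[1/2] \<rightarrow> \<int> \<times> \<int>(2\<^sup>\<infinity>)\<close> with inverse \<open>(a, p) \<mapsto> a + p\<close>. On \<open>\<int>(2\<^sup>\<infinity>)\<close> take as norm the exponent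
  of the denominator of p; on \<open>\<int>[1/2]\<close> take \<open>|x|\<close> plus that exponent. Both are proper, since
  a bound on the exponent and on the absolute value leaves only finitely many dyadics. Since
  the floor and the integer shift in the inverse move distances by at most 1 while the
  exponent ignores integer shifts, both maps change distances by at most an additive constant,
  so they are mutually inverse coarse equivalences.\<close>

lemma coarse_map_if_dist_le:
  assumes "\<forall>x\<in>X. f x \<in> Y"
    and "\<And>x y. x \<in> X \<Longrightarrow> y \<in> X \<Longrightarrow> dY (f x) (f y) \<le> dX x y + C"
  shows "coarse_map X dX Y dY f"
  unfolding coarse_map_def
proof (intro conjI assms(1) allI)
  fix \<delta> :: real
  show "\<exists>\<epsilon>. \<forall>x\<in>X. \<forall>y\<in>X. dX x y \<le> \<delta> \<longrightarrow> dY (f x) (f y) \<le> \<epsilon>"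
    using assms(2) by (intro exI[of _ "\<delta> + C"]) force
qed

lemma coarse_equivalence_if_inverse:
  assumes "coarse_map X dX Y dY f" and "coarse_map Y dY X dX g"
    and "\<And>x. x \<in> X \<Longrightarrow> g (f x) = x" and "\<And>y. y \<in> Y \<Longrightarrow> f (g y) = y"
    and "\<And>x. x \<in> X \<Longrightarrow> dX x x = 0" and "\<And>y. y \<in> Y \<Longrightarrow> dY y y = 0"
  shows "coarse_equivalence X dX Y dY f"
  unfolding coarse_equivalence_def bounded_distance_def
  using assms by (intro conjI exI[of _ g] exI[of _ 0]) auto

(* On non-dyadic rationals the LEAST below ranges over an empty set; only values on dyadic matter. *)
definition denom_exp :: "rat \<Rightarrow> nat" where
  "denom_exp p = (LEAST k. p * 2 ^ k \<in> \<int>)"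

lemma dyadic_iff_ex_mult_pow2: "p \<in> dyadic \<longleftrightarrow> (\<exists>k::nat. p * 2 ^ k \<in> \<int>)"
proof
  assume "p \<in> dyadic"
  then obtain m k where "p = of_int m / 2 ^ k" unfolding dyadic_def by auto
  then have "p * 2 ^ k = of_int m" by simp
  then show "\<exists>k::nat. p * 2 ^ k \<in> \<int>" by (metis Ints_of_int)
next
  assume "\<exists>k::nat. p * 2 ^ k \<in> \<int>"
  then obtain k m where "p * 2 ^ k = of_int m" by (auto elim: Ints_cases)
  then have "p = of_int m / 2 ^ k" by (simp add: field_simps)
  then show "p \<in> dyadic" unfolding dyadic_def by auto
qed

lemma mult_pow2_Ints_mono:
  assumes "p * 2 ^ a \<in> \<int>" and "a \<le> b"
  shows "(p::rat) * 2 ^ b \<in> \<int>"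
proof -
  have "p * 2 ^ b = (p * 2 ^ a) * of_int (2 ^ (b - a))"
    using assms(2) by (simp add: power_add[symmetric])
  then show ?thesis using assms(1) Ints_mult Ints_of_int by metis
qed

lemma mult_pow2_denom_exp_Ints: "p \<in> dyadic \<Longrightarrow> p * 2 ^ denom_exp p \<in> \<int>"
  unfolding dyadic_iff_ex_mult_pow2 denom_exp_def by (auto intro: LeastI_ex)

lemma denom_exp_le_iff: "p \<in> dyadic \<Longrightarrow> denom_exp p \<le> n \<longleftrightarrow> p * 2 ^ n \<in> \<int>"
  using mult_pow2_denom_exp_Ints mult_pow2_Ints_mono Least_le[of "\<lambda>k. p * 2 ^ k \<in> \<int>"]
  unfolding denom_exp_def by blast

lemma denom_exp_eq_0_iff: "p \<in> dyadic \<Longrightarrow> denom_exp p = 0 \<longleftrightarrow> p \<in> \<int>"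
  using denom_exp_le_iff[of p 0] by simp

lemma denom_exp_add_of_int [simp]: "denom_exp (p + of_int n) = denom_exp p"
proof -
  have "(p + of_int n) * 2 ^ k \<in> \<int> \<longleftrightarrow> p * 2 ^ k \<in> \<int>" for k :: nat
  proof -
    have "(p + of_int n) * 2 ^ k = p * 2 ^ k + of_int (n * 2 ^ k)"
      by (simp add: algebra_simps)
    then show ?thesis by (metis Ints_add Ints_diff Ints_of_int add_diff_cancel_right')
  qed
  then show ?thesis unfolding denom_exp_def by presburger
qed

lemma denom_exp_uminus [simp]: "denom_exp (- p) = denom_exp p"
proof -
  have "(- p) * 2 ^ k \<in> \<int> \<longleftrightarrow> p * 2 ^ k \<in> \<int>" for k :: nat
    by (metis Ints_minus minus_minus mult_minus_left)
  then show ?thesis unfolding denom_exp_def by presburger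
qed

lemma denom_exp_frac [simp]: "denom_exp (frac p) = denom_exp p"
  using denom_exp_add_of_int[of p "- \<lfloor>p\<rfloor>"] by (simp add: frac_def)

lemma denom_exp_of_int [simp]: "denom_exp (of_int n) = 0"
  using denom_exp_eq_0_iff[of "of_int n"] dyadic_iff_ex_mult_pow2 by fastforce

lemma denom_exp_0 [simp]: "denom_exp 0 = 0"
  using denom_exp_of_int[of 0] by simp

lemma denom_exp_add_le:
  assumes "p \<in> dyadic" and "q \<in> dyadic"
  shows "denom_exp (p + q) \<le> denom_exp p + denom_exp q"
proof -
  have "p * 2 ^ (denom_exp p + denom_exp q) \<in> \<int>" "q * 2 ^ (denom_exp p + denom_exp q) \<in> \<int>"
    using assms mult_pow2_denom_exp_Ints mult_pow2_Ints_mono le_add1 le_add2 by blast+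
  then have "(p + q) * 2 ^ (denom_exp p + denom_exp q) \<in> \<int>"
    by (simp add: distrib_right)
  then show ?thesis unfolding denom_exp_def by (rule Least_le)
qed

lemma denom_exp_diff_shift:
  "denom_exp ((of_int b + q) - (of_int a + p)) = denom_exp (q - p)"
  using denom_exp_add_of_int[of "q - p" "b - a"] by (simp add: algebra_simps)

lemma denom_exp_frac_diff: "denom_exp (frac y - frac x) = denom_exp (y - x)"
  using denom_exp_add_of_int[of "y - x" "\<lfloor>x\<rfloor> - \<lfloor>y\<rfloor>"] by (simp add: frac_def algebra_simps)

lemma dyadic_add: "p \<in> dyadic \<Longrightarrow> q \<in> dyadic \<Longrightarrow> p + q \<in> dyadic"
  using mult_pow2_denom_exp_Ints mult_pow2_Ints_mono[OF _ le_add1] mult_pow2_Ints_mono[OF _ le_add2]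
  by (metis Ints_add distrib_right dyadic_iff_ex_mult_pow2)

lemma dyadic_of_int: "of_int n \<in> dyadic"
  unfolding dyadic_iff_ex_mult_pow2 by (rule exI[of _ 0]) simp

lemma pruefer2_subset_dyadic: "pruefer2 \<subseteq> dyadic"
proof
  fix p assume "p \<in> pruefer2"
  then obtain x where "x \<in> dyadic" "p = x + of_int (- \<lfloor>x\<rfloor>)"
    unfolding pruefer2_def frac_def by auto
  then show "p \<in> dyadic" using dyadic_add dyadic_of_int by blast
qed

lemma pruefer2_bounds: "p \<in> pruefer2 \<Longrightarrow> 0 \<le> p \<and> p < 1"
  unfolding pruefer2_def by (auto simp: frac_lt_1)

lemma floor_pruefer2: "p \<in> pruefer2 \<Longrightarrow> \<lfloor>p\<rfloor> = 0"
  using pruefer2_bounds by (simp add: floor_eq_iff)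

lemma finite_bounded_mult_pow2_Ints: "finite {z::rat. z * 2 ^ n \<in> \<int> \<and> \<bar>z\<bar> \<le> R}"
proof -
  define M where "M = \<lceil>R * 2 ^ n\<rceil>"
  have "{z::rat. z * 2 ^ n \<in> \<int> \<and> \<bar>z\<bar> \<le> R} \<subseteq> (\<lambda>m. of_int m / 2 ^ n) ` {-M..M}"
  proof
    fix z :: rat assume "z \<in> {z. z * 2 ^ n \<in> \<int> \<and> \<bar>z\<bar> \<le> R}"
    then obtain m where m: "z * 2 ^ n = of_int m" and "\<bar>z\<bar> \<le> R" by (auto elim: Ints_cases)
    have "of_int \<bar>m\<bar> = \<bar>z\<bar> * 2 ^ n" using m by (metis abs_mult power_abs abs_numeral of_int_abs)
    also have "\<dots> \<le> R * 2 ^ n" using \<open>\<bar>z\<bar> \<le> R\<close> by simp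
    finally have "of_int \<bar>m\<bar> \<le> R * 2 ^ n" .
    then have "\<bar>m\<bar> \<le> M" unfolding M_def by linarith
    moreover have "z = of_int m / 2 ^ n" using m by (simp add: field_simps)
    ultimately show "z \<in> (\<lambda>m. of_int m / 2 ^ n) ` {-M..M}" by (auto simp: abs_le_iff)
  qed
  then show ?thesis by (rule finite_subset) simp
qed

lemma finite_dyadic_bounded:
  "finite {z \<in> dyadic. real_of_rat \<bar>z\<bar> \<le> r \<and> real (denom_exp z) \<le> r}"
proof (rule finite_subset)
  show "finite {z::rat. z * 2 ^ nat \<lceil>r\<rceil> \<in> \<int> \<and> \<bar>z\<bar> \<le> of_int \<lceil>r\<rceil>}"
    by (rule finite_bounded_mult_pow2_Ints)
  show "{z \<in> dyadic. real_of_rat \<bar>z\<bar> \<le> r \<and> real (denom_exp z) \<le> r}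
      \<subseteq> {z. z * 2 ^ nat \<lceil>r\<rceil> \<in> \<int> \<and> \<bar>z\<bar> \<le> of_int \<lceil>r\<rceil>}"
  proof (intro subsetI CollectI conjI)
    fix z assume z: "z \<in> {z \<in> dyadic. real_of_rat \<bar>z\<bar> \<le> r \<and> real (denom_exp z) \<le> r}"
    then have "denom_exp z \<le> nat \<lceil>r\<rceil>" by simp linarith
    with z show "z * 2 ^ nat \<lceil>r\<rceil> \<in> \<int>" using denom_exp_le_iff by blast
    have "real_of_rat \<bar>z\<bar> \<le> real_of_rat (of_int \<lceil>r\<rceil>)" using z by simp linarith
    then show "\<bar>z\<bar> \<le> of_int \<lceil>r\<rceil>" by (simp only: of_rat_less_eq)
  qed
qed

definition dyadic_norm :: "rat \<Rightarrow> real" where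
  "dyadic_norm x = real_of_rat \<bar>x\<bar> + real (denom_exp x)"

lemma proper_norm_abs_int: "proper_norm UNIV (+) uminus 0 (\<lambda>k::int. real_of_int \<bar>k\<bar>)"
  unfolding proper_norm_def
proof (intro conjI ballI allI)
  fix r :: real
  have "{k::int. k \<in> UNIV \<and> real_of_int \<bar>k\<bar> \<le> r} \<subseteq> {-\<lceil>r\<rceil>..\<lceil>r\<rceil>}"
    by (auto simp: abs_le_iff) linarith+
  then show "finite {k::int. k \<in> UNIV \<and> real_of_int \<bar>k\<bar> \<le> r}"
    by (rule finite_subset) simp
qed auto

lemma proper_norm_denom_exp: "proper_norm pruefer2 padd pneg 0 (\<lambda>p. real (denom_exp p))"
  unfolding proper_norm_def
proof (intro conjI ballI allI)
  fix p assume p: "p \<in> pruefer2"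
  then have "p \<in> \<int> \<longleftrightarrow> p = 0"
    using pruefer2_bounds[OF p] by (auto elim!: Ints_cases)
  then show "real (denom_exp p) = 0 \<longleftrightarrow> p = 0"
    using denom_exp_eq_0_iff p pruefer2_subset_dyadic by auto
  show "real (denom_exp (pneg p)) = real (denom_exp p)" by (simp add: pneg_def)
next
  fix p q assume "p \<in> pruefer2" "q \<in> pruefer2"
  then show "real (denom_exp (padd p q)) \<le> real (denom_exp p) + real (denom_exp q)"
    using denom_exp_add_le pruefer2_subset_dyadic by (simp add: padd_def) (metis of_nat_add of_nat_mono subsetD)
next
  fix r :: real
  have "{p \<in> pruefer2. real (denom_exp p) \<le> r}
      \<subseteq> {z \<in> dyadic. real_of_rat \<bar>z\<bar> \<le> max r 1 \<and> real (denom_exp z) \<le> max r 1}"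
  proof (intro subsetI CollectI conjI)
    fix p assume p: "p \<in> {p \<in> pruefer2. real (denom_exp p) \<le> r}"
    then show "p \<in> dyadic" using pruefer2_subset_dyadic by auto
    have "\<bar>p\<bar> \<le> 1" using p pruefer2_bounds by fastforce
    then show "real_of_rat \<bar>p\<bar> \<le> max r 1" by (metis of_rat_1 of_rat_less_eq max.coboundedI2)
    show "real (denom_exp p) \<le> max r 1" using p by auto
  qed
  then show "finite {p \<in> pruefer2. real (denom_exp p) \<le> r}"
    using finite_dyadic_bounded finite_subset by blast
qed

lemma proper_norm_dyadic_norm: "proper_norm dyadic (+) uminus 0 dyadic_norm"
  unfolding proper_norm_def dyadic_norm_def
proof (intro conjI ballI allI)
  fix x assume "x \<in> dyadic"
  show "real_of_rat \<bar>x\<bar> + real (denom_exp x) = 0 \<longleftrightarrow> x = 0"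
    by (metis add_nonneg_eq_0_iff abs_eq_0 denom_exp_0 of_nat_0 of_nat_0_le_iff
        of_rat_eq_0_iff zero_le_of_rat_iff abs_ge_zero)
  show "real_of_rat \<bar>- x\<bar> + real (denom_exp (- x)) = real_of_rat \<bar>x\<bar> + real (denom_exp x)"
    by simp
next
  fix x y assume "x \<in> dyadic" "y \<in> dyadic"
  moreover have "real_of_rat \<bar>x + y\<bar> \<le> real_of_rat \<bar>x\<bar> + real_of_rat \<bar>y\<bar>"
    by (metis abs_triangle_ineq of_rat_add of_rat_less_eq)
  ultimately show "real_of_rat \<bar>x + y\<bar> + real (denom_exp (x + y))
      \<le> real_of_rat \<bar>x\<bar> + real (denom_exp x) + (real_of_rat \<bar>y\<bar> + real (denom_exp y))"
    using denom_exp_add_le[of x y] by linarith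
next
  fix r :: real
  have "{x \<in> dyadic. real_of_rat \<bar>x\<bar> + real (denom_exp x) \<le> r}
      \<subseteq> {z \<in> dyadic. real_of_rat \<bar>z\<bar> \<le> r \<and> real (denom_exp z) \<le> r}"
    by auto (smt (verit) of_nat_0_le_iff zero_le_of_rat_iff abs_ge_zero)+
  then show "finite {x \<in> dyadic. real_of_rat \<bar>x\<bar> + real (denom_exp x) \<le> r}"
    using finite_dyadic_bounded finite_subset by blast
qed

definition int_metric :: "int \<Rightarrow> int \<Rightarrow> real" where
  "int_metric = norm_metric (+) uminus (\<lambda>k. real_of_int \<bar>k\<bar>)"

definition pruefer2_metric :: "rat \<Rightarrow> rat \<Rightarrow> real" where
  "pruefer2_metric = norm_metric padd pneg (\<lambda>p. real (denom_exp p))"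

definition dyadic_metric :: "rat \<Rightarrow> rat \<Rightarrow> real" where
  "dyadic_metric = norm_metric (+) uminus dyadic_norm"

definition l1_metric :: "('a \<Rightarrow> 'a \<Rightarrow> real) \<Rightarrow> ('b \<Rightarrow> 'b \<Rightarrow> real) \<Rightarrow> 'a \<times> 'b \<Rightarrow> 'a \<times> 'b \<Rightarrow> real" where
  "l1_metric dA dB = (\<lambda>(a, p) (b, q). dA a b + dB p q)"

lemma pruefer2_metric_eq: "pruefer2_metric p q = real (denom_exp (q - p))"
proof -
  have "frac (- p) + q = (q - p) + of_int (- \<lfloor>- p\<rfloor>)" by (simp add: frac_def)
  then show ?thesis unfolding pruefer2_metric_def norm_metric_def padd_def pneg_def
    by (metis denom_exp_add_of_int denom_exp_frac)
qed

lemma dyadic_metric_eq: "dyadic_metric x y = real_of_rat \<bar>y - x\<bar> + real (denom_exp (y - x))"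
  by (simp add: dyadic_metric_def dyadic_norm_def norm_metric_def)

lemma l1_metric_eq:
  "l1_metric int_metric pruefer2_metric (a, p) (b, q) = real_of_int \<bar>b - a\<bar> + real (denom_exp (q - p))"
  by (simp add: l1_metric_def int_metric_def norm_metric_def pruefer2_metric_eq)

lemma abs_floor_diff_le: "real_of_int \<bar>\<lfloor>y\<rfloor> - \<lfloor>x\<rfloor>\<bar> \<le> real_of_rat \<bar>y - x\<bar> + 1"
proof -
  have "of_int \<bar>\<lfloor>y\<rfloor> - \<lfloor>x\<rfloor>\<bar> \<le> \<bar>y - x\<bar> + (1::rat)"
    unfolding abs_le_iff by linarith
  then show ?thesis
    by (metis of_rat_1 of_rat_add of_rat_less_eq of_rat_of_int_eq)
qed

lemma abs_shift_diff_le: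
  assumes "0 \<le> p" "p < 1" "0 \<le> q" "q < 1"
  shows "real_of_rat \<bar>(of_int b + q) - (of_int a + p)\<bar> \<le> real_of_int \<bar>b - a\<bar> + 1"
proof -
  have "\<bar>(of_int b + q) - (of_int a + p)\<bar> \<le> of_int \<bar>b - a\<bar> + (1::rat)"
    using assms unfolding abs_le_iff by linarith
  then show ?thesis
    by (metis of_rat_1 of_rat_add of_rat_less_eq of_rat_of_int_eq)
qed

lemma coarse_map_floor_frac:
  "coarse_map dyadic dyadic_metric (UNIV \<times> pruefer2) (l1_metric int_metric pruefer2_metric)
     (\<lambda>x. (\<lfloor>x\<rfloor>, frac x))"
  using abs_floor_diff_le
  by (intro coarse_map_if_dist_le[where C = 1])
    (auto simp: pruefer2_def dyadic_metric_eq l1_metric_eq denom_exp_frac_diff)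

lemma coarse_map_add_pair:
  "coarse_map (UNIV \<times> pruefer2) (l1_metric int_metric pruefer2_metric) dyadic dyadic_metric
     (\<lambda>(a, p). of_int a + p)"
proof (rule coarse_map_if_dist_le[where C = 1])
  show "\<forall>y\<in>UNIV \<times> pruefer2. (\<lambda>(a, p). of_int a + p) y \<in> dyadic"
    using dyadic_add dyadic_of_int pruefer2_subset_dyadic by auto
  fix x y :: "int \<times> rat" assume "x \<in> UNIV \<times> pruefer2" "y \<in> UNIV \<times> pruefer2"
  then obtain a b p q where "x = (a, p)" "y = (b, q)" "0 \<le> p" "p < 1" "0 \<le> q" "q < 1"
    using pruefer2_bounds by fastforce
  then show "dyadic_metric ((\<lambda>(a, p). of_int a + p) x) ((\<lambda>(a, p). of_int a + p) y)
      \<le> l1_metric int_metric pruefer2_metric x y + 1"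
    using abs_shift_diff_le[of p q b a] by (simp add: dyadic_metric_eq l1_metric_eq denom_exp_diff_shift)
qed

lemma coarse_equivalence_floor_frac:
  "coarse_equivalence dyadic dyadic_metric (UNIV \<times> pruefer2) (l1_metric int_metric pruefer2_metric)
     (\<lambda>x. (\<lfloor>x\<rfloor>, frac x))"
  using coarse_map_floor_frac coarse_map_add_pair
  by (rule coarse_equivalence_if_inverse)
    (auto simp: frac_def floor_pruefer2 dyadic_metric_eq l1_metric_eq)

lemma bounded_distance_of_int:
  "bounded_distance UNIV (l1_metric int_metric pruefer2_metric) (\<lambda>k. (\<lfloor>of_int k :: rat\<rfloor>, frac (of_int k :: rat)))
     (\<lambda>k. (k, 0))"
  unfolding bounded_distance_def by (auto simp: l1_metric_eq)

lemma bounded_distance_frac: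
  "bounded_distance dyadic pruefer2_metric (\<lambda>x. snd (\<lfloor>x\<rfloor>, frac x)) frac"
  unfolding bounded_distance_def by (auto simp: pruefer2_metric_eq)

theorem mainTheorem16:
  shows "coarsely_split \<and> coarsely_split_with (\<lambda>k. real_of_int \<bar>k\<bar>)"
proof -
  note metric_defs = dyadic_metric_def l1_metric_def int_metric_def pruefer2_metric_def
  have "coarsely_split_with (\<lambda>k. real_of_int \<bar>k\<bar>)"
    unfolding coarsely_split_with_def Let_def
    by (intro conjI exI[of _ dyadic_norm] exI[of _ "\<lambda>p. real (denom_exp p)"]
        exI[of _ "\<lambda>x. (\<lfloor>x\<rfloor>, frac x)"] proper_norm_abs_int proper_norm_dyadic_norm
        proper_norm_denom_exp coarse_equivalence_floor_frac[unfolded metric_defs]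
        bounded_distance_of_int[unfolded metric_defs] bounded_distance_frac[unfolded metric_defs])
  then show ?thesis unfolding coarsely_split_def by blast
qed

end
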